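(* Let $n\ge 1$, $A\in\mathbb{R}^{n\times n}$ and $C\in\mathbb{R}^{1\times n}$, with $(A,C)$ an observable pair and all eigenvalues of $A$ nonzero. If all eigenvalues of $A$ are positive real numbers, then for any $n$ distinct nonnegative integers $t_1,\ldots,t_n$, the matrix with rows $CA^{t_1},\ldots,CA^{t_n}$ has rank $n$.
   Context: Setting: discrete-time single-output system $x(t+1)=Ax(t)+Bu(t)$, $y(t)=Cx(t)+Du(t)$ with output measured at selected time instances; the matrix with rows $CA^{t_i}$ is the sample-based observability matrix. $(A,C)$ observable means the matrix with rows $C,CA,\ldots,CA^{n-1}$ has rank $n$. *)

theory Defs
  imports "HOL-Analysis.Analysis"
begin

fun matpow :: "'a::semiring_1^'n^'n \<Rightarrow> nat \<Rightarrow> 'a^'n^'n" where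
  "matpow A 0 = mat 1"
| "matpow A (Suc k) = A ** matpow A k"

text \<open>(A,C) observable: the matrix with rows C, CA, ..., CA^(n-1) has rank n
  (rank = dimension of the span of the rows, as in the library definition of rank).\<close>
definition observable :: "real^'n^'n \<Rightarrow> real^'n \<Rightarrow> bool" where
  "observable A C \<longleftrightarrow> vec.dim {C v* matpow A k | k. k < CARD('n)} = CARD('n)"

definition cx_mat :: "real^'n^'m \<Rightarrow> complex^'n^'m" where
  "cx_mat A = (\<chi> i j. complex_of_real (A $ i $ j))"

definition eigenvalue_of :: "real^'n^'n \<Rightarrow> complex \<Rightarrow> bool" where
  "eigenvalue_of A c \<longleftrightarrow> (\<exists>v::complex^'n. v \<noteq> 0 \<and> cx_mat A *v v = c *s v)"

end

theory Submission
  imports Defs "HOL-Computational_Algebra.Fundamental_Theorem_Algebra"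
begin

(* Suppose the sampled matrix maps x to 0 and put f k = C A^k x, so f vanishes at the n
   distinct times t_i. A nonzero polynomial of degree at most n annihilates x under A; factoring
   it over the complex numbers and discarding the factors A - m with m not an eigenvalue (these
   act injectively) leaves positive reals l_1, ..., l_m, m <= n, with
   (A - l_1) ... (A - l_m) x = 0. Hence f satisfies the recurrence (S - l_1) ... (S - l_m) f = 0,
   S the shift. A discrete Rolle argument, applied to f k / l^k, shows that a nonzero solution of
   such a recurrence with positive roots cannot have m + 1 weakly alternating signs, so it has
   fewer than m zeros. Thus f = 0, x is orthogonal to every C A^k, and observability gives x = 0. *)

definition shift_diff :: "real \<Rightarrow> (nat \<Rightarrow> real) \<Rightarrow> nat \<Rightarrow> real" where
  "shift_diff l f t = f (Suc t) - l * f t"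

lemma shift_diff_eq_0_imp_geometric:
  assumes "shift_diff l f = (\<lambda>_. 0)"
  shows "f t = l ^ t * f 0"
proof (induction t)
  case (Suc t)
  have "f (Suc t) = l * f t"
    using fun_cong[OF assms, of t] by (simp add: shift_diff_def)
  with Suc show ?case by simp
qed simp

lemma exists_nonpos_increment:
  fixes h :: "nat \<Rightarrow> real"
  assumes "a < b" "\<sigma> * (h b - h a) \<le> 0"
  shows "\<exists>r. a \<le> r \<and> r < b \<and> \<sigma> * (h (Suc r) - h r) \<le> 0"
proof (rule ccontr)
  assume "\<not> ?thesis"
  then have "0 < (\<Sum>r = a..<b. \<sigma> * (h (Suc r) - h r))"
    using assms(1) by (intro sum_pos) auto
  also have "\<dots> = \<sigma> * (h b - h a)"
    using assms(1) by (simp add: sum_distrib_left[symmetric] sum_Suc_diff')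
  finally show False
    using assms(2) by simp
qed

(* shift_diff l f t = l^(t+1) (h (t+1) - h t) for h t = f t / l^t, so the signs of h at the
   points s i yield sign changes of shift_diff l f in between. *)
lemma shift_diff_alternating:
  assumes "l > 0" "\<forall>i<m. s i < s (Suc i)" "\<forall>i\<le>m. 0 \<le> (-1)^i * e * f (s i)"
  shows "\<exists>r. \<forall>i<m. s i \<le> r i \<and> r i < s (Suc i) \<and> 0 \<le> (-1)^i * (-e) * shift_diff l f (r i)"
proof -
  define h where "h t = f t / l ^ t" for t
  have h_sign: "0 \<le> (-1)^i * e * h (s i)" if "i \<le> m" for i
  proof -
    have "(-1)^i * e * h (s i) = ((-1)^i * e * f (s i)) / l ^ s i"
      by (simp add: h_def)
    then show ?thesis
      using assms(1,3) that by simp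
  qed
  have "\<exists>r. s i \<le> r \<and> r < s (Suc i) \<and> 0 \<le> (-1)^i * (-e) * shift_diff l f r" if i: "i < m" for i
  proof -
    have "(-1)^i * e * (h (s (Suc i)) - h (s i))
        = - ((-1)^Suc i * e * h (s (Suc i))) - (-1)^i * e * h (s i)"
      by (simp add: algebra_simps)
    also have "\<dots> \<le> 0"
      using h_sign[of i] h_sign[of "Suc i"] i by simp
    finally obtain r where r: "s i \<le> r" "r < s (Suc i)" "(-1)^i * e * (h (Suc r) - h r) \<le> 0"
      using exists_nonpos_increment[of "s i" "s (Suc i)" "(-1)^i * e" h] assms(2) i by auto
    have "(-1)^i * (-e) * shift_diff l f r = l ^ Suc r * - ((-1)^i * e * (h (Suc r) - h r))"
      using assms(1) by (simp add: shift_diff_def h_def field_simps)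
    also have "\<dots> \<ge> 0"
      using r(3) assms(1) by (intro mult_nonneg_nonneg) auto
    finally show ?thesis
      using r(1,2) by blast
  qed
  then show ?thesis
    by (metis (no_types))
qed

lemma recurrence_zero_if_alternating:
  assumes "\<forall>l\<in>set ls. l > 0" "fold shift_diff ls f = (\<lambda>_. 0)"
    and "\<forall>i<length ls. s i < s (Suc i)" "\<forall>i\<le>length ls. 0 \<le> (-1)^i * e * f (s i)" "e \<noteq> 0"
  shows "f = (\<lambda>_. 0)"
  using assms
proof (induction ls arbitrary: f s e)
  case (Cons l ls)
  have "l > 0"
    using Cons.prems(1) by simp
  obtain r where r: "\<forall>i<Suc (length ls). s i \<le> r i \<and> r i < s (Suc i)
      \<and> 0 \<le> (-1)^i * (-e) * shift_diff l f (r i)"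
    using shift_diff_alternating[OF \<open>l > 0\<close> Cons.prems(3,4)[unfolded length_Cons]] by blast
  have "shift_diff l f = (\<lambda>_. 0)"
  proof (rule Cons.IH[where s = r and e = "-e"])
    show "\<forall>l\<in>set ls. 0 < l"
      using Cons.prems(1) by simp
    show "fold shift_diff ls (shift_diff l f) = (\<lambda>_. 0)"
      using Cons.prems(2) by simp
    show "\<forall>i<length ls. r i < r (Suc i)"
    proof (intro allI impI)
      fix i
      assume "i < length ls"
      then have "r i < s (Suc i)" "s (Suc i) \<le> r (Suc i)"
        using r by simp_all
      then show "r i < r (Suc i)"
        by linarith
    qed
    show "\<forall>i\<le>length ls. 0 \<le> (-1)^i * (-e) * shift_diff l f (r i)"
      using r by (simp add: less_Suc_eq_le)
    show "-e \<noteq> 0"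
      using Cons.prems(5) by simp
  qed
  then have geometric: "f t = l ^ t * f 0" for t
    by (rule shift_diff_eq_0_imp_geometric)
  have "0 \<le> l ^ s 0 * (e * f 0)"
    using Cons.prems(4)[rule_format, of 0] geometric[of "s 0"] by (simp add: algebra_simps)
  moreover have "0 \<le> l ^ s 1 * - (e * f 0)"
    using Cons.prems(4)[rule_format, of 1] geometric[of "s 1"] by (simp add: algebra_simps)
  moreover have "0 < l ^ k" for k
    using \<open>l > 0\<close> by simp
  ultimately have "0 \<le> e * f 0" "0 \<le> - (e * f 0)"
    by (metis mult_le_cancel_left_pos mult_zero_right)+
  then have "f 0 = 0"
    using Cons.prems(5) by simp
  show ?case
  proof
    fix t
    show "f t = 0"
      using geometric[of t] \<open>f 0 = 0\<close> by simp
  qed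
qed simp

lemma recurrence_zero_if_many_zeros:
  assumes "\<forall>l\<in>set ls. l > 0" "fold shift_diff ls f = (\<lambda>_. 0)"
    and "finite Z" "length ls \<le> card Z" "\<forall>z\<in>Z. f z = 0"
  shows "f = (\<lambda>_. 0)"
proof -
  define m where "m = length ls"
  define L where "L = sorted_list_of_set Z"
  have L: "sorted_wrt (<) L" "set L = Z" "length L = card Z"
    using assms(3) by (simp_all add: L_def)
  have L_in: "L ! i \<in> Z" if "i < m" for i
    using that assms(4) L by (metis m_def nth_mem order.strict_trans2)
  \<comment> \<open>the m smallest zeros, then one point beyond all of them\<close>
  define s where "s i = (if i < m then L ! i else Suc (Max Z))" for i
  define e :: real where "e = (-1)^m * (if f (s m) \<ge> 0 then 1 else -1)"
  have "\<forall>i<m. s i < s (Suc i)"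
  proof (intro allI impI)
    fix i
    assume i: "i < m"
    show "s i < s (Suc i)"
    proof (cases "Suc i < m")
      case True
      then have "L ! i < L ! Suc i"
        using L(1,3) assms(4) by (simp add: m_def sorted_wrt_nth_less)
      with True show ?thesis
        by (simp add: s_def)
    next
      case False
      have "L ! i \<le> Max Z"
        using L_in[OF i] assms(3) by simp
      with False i show ?thesis
        by (simp add: s_def)
    qed
  qed
  moreover have "\<forall>i\<le>m. 0 \<le> (-1)^i * e * f (s i)"
  proof (intro allI impI)
    fix i
    assume "i \<le> m"
    then consider "i < m" | "i = m"
      by linarith
    then show "0 \<le> (-1)^i * e * f (s i)"
    proof cases
      case 1
      then show ?thesis
        using L_in assms(5) by (simp add: s_def)
    next
      case 2
      have "(-1)^m * e = (if f (s m) \<ge> 0 then 1 else -1)"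
        by (simp add: e_def flip: mult.assoc power_add)
      with 2 show ?thesis
        by simp
    qed
  qed
  ultimately show ?thesis
    using recurrence_zero_if_alternating[OF assms(1,2)] by (simp add: m_def e_def)
qed

lemma matpow_Suc_right: "matpow A (Suc k) = matpow A k ** A"
  by (induction k) (simp_all add: matrix_mul_assoc)

lemma matpow_mult_vector_Suc_right: "matpow A (Suc k) *v w = matpow A k *v (A *v w)"
  unfolding matpow_Suc_right by (simp add: matrix_vector_mul_assoc)

definition poly_vec :: "'a::field^'n^'n \<Rightarrow> 'a poly \<Rightarrow> 'a^'n \<Rightarrow> 'a^'n" where
  "poly_vec M p w = (\<Sum>i\<le>degree p. coeff p i *s (matpow M i *v w))"

lemma poly_vec_eq_sum:
  assumes "degree p \<le> N"
  shows "poly_vec M p w = (\<Sum>i\<le>N. coeff p i *s (matpow M i *v w))"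
  unfolding poly_vec_def
  by (rule sum.mono_neutral_left) (use assms in \<open>auto simp: coeff_eq_0\<close>)

lemma poly_vec_add: "poly_vec M (p + q) w = poly_vec M p w + poly_vec M q w"
  using degree_add_le_max[of p q]
  by (simp add: poly_vec_eq_sum[where N = "max (degree p) (degree q)"]
      vector_sadd_rdistrib sum.distrib)

lemma poly_vec_smult: "poly_vec M (smult c p) w = c *s poly_vec M p w"
  by (simp add: poly_vec_eq_sum[where N = "degree p"] vec.scale_sum_right vector_smult_assoc)

lemma poly_vec_pCons_0: "poly_vec M (pCons 0 p) w = poly_vec M p (M *v w)"
proof -
  have "poly_vec M (pCons 0 p) w = (\<Sum>i\<le>Suc (degree p). coeff (pCons 0 p) i *s (matpow M i *v w))"
    by (rule poly_vec_eq_sum) (simp add: degree_pCons_le)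
  also have "\<dots> = poly_vec M p (M *v w)"
    by (subst sum.atMost_Suc_shift) (simp add: poly_vec_def matpow_mult_vector_Suc_right del: matpow.simps)
  finally show ?thesis .
qed

lemma poly_vec_diff_smult_right:
  "poly_vec M p (u - c *s v) = poly_vec M p u - c *s poly_vec M p v"
  by (simp add: poly_vec_def matrix_vector_mult_diff_distrib vector_scalar_commute
      vector_ssub_ldistrib vector_smult_assoc mult.commute vec.scale_sum_right sum_subtractf)

lemma poly_vec_linear_factor:
  "poly_vec M ([:-m, 1:] * q) w = poly_vec M q (M *v w - m *s w)"
proof -
  have "[:-m, 1:] * q = smult (-m) q + pCons 0 q"
    by (simp add: mult_pCons_left)
  then have "poly_vec M ([:-m, 1:] * q) w = - m *s poly_vec M q w + poly_vec M q (M *v w)"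
    by (simp only: poly_vec_add poly_vec_smult poly_vec_pCons_0)
  then show ?thesis
    by (simp add: poly_vec_diff_smult_right)
qed

definition apply_linear_factors :: "'a::field^'n^'n \<Rightarrow> 'a list \<Rightarrow> 'a^'n \<Rightarrow> 'a^'n" where
  "apply_linear_factors M ms = fold (\<lambda>m v. M *v v - m *s v) ms"

lemma poly_vec_prod_linear_factors:
  "poly_vec M (\<Prod>m\<leftarrow>ms. [:-m, 1:]) w = apply_linear_factors M ms w"
proof (induction ms arbitrary: w)
  case (Cons a ms)
  have "poly_vec M (\<Prod>m\<leftarrow>a # ms. [:-m, 1:]) w
      = poly_vec M ([:-a, 1:] * (\<Prod>m\<leftarrow>ms. [:-m, 1:])) w"
    by simp
  also have "\<dots> = apply_linear_factors M (a # ms) w"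
    by (simp only: poly_vec_linear_factor Cons.IH) (simp add: apply_linear_factors_def)
  finally show ?case .
qed (simp add: apply_linear_factors_def poly_vec_def)

lemma apply_linear_factors_shift:
  "apply_linear_factors M ms (M *v w - m *s w)
    = M *v apply_linear_factors M ms w - m *s apply_linear_factors M ms w"
proof (induction ms arbitrary: w)
  case (Cons a ms)
  have "M *v (M *v w - m *s w) - a *s (M *v w - m *s w)
      = M *v (M *v w - a *s w) - m *s (M *v w - a *s w)"
    by (simp add: vec_eq_iff matrix_vector_mult_diff_distrib vector_scalar_commute algebra_simps)
  then show ?case
    using Cons.IH[of "M *v w - a *s w"] by (simp add: apply_linear_factors_def)
qed (simp add: apply_linear_factors_def)

lemma apply_linear_factors_filter:
  assumes "\<And>m u. \<not> P m \<Longrightarrow> M *v u - m *s u = 0 \<Longrightarrow> u = 0"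
    and "apply_linear_factors M ms w = 0"
  shows "apply_linear_factors M (filter P ms) w = 0"
  using assms(2)
proof (induction ms arbitrary: w)
  case (Cons a ms)
  show ?case
  proof (cases "P a")
    case True
    with Cons show ?thesis
      by (simp add: apply_linear_factors_def)
  next
    case False
    have "M *v apply_linear_factors M ms w - a *s apply_linear_factors M ms w
        = apply_linear_factors M ms (M *v w - a *s w)"
      by (rule apply_linear_factors_shift[symmetric])
    also have "\<dots> = 0"
      using Cons.prems by (simp add: apply_linear_factors_def)
    finally have "M *v apply_linear_factors M ms w - a *s apply_linear_factors M ms w = 0" .
    then have "apply_linear_factors M ms w = 0"
      using assms(1) False by blast
    with Cons.IH False show ?thesis
      by (simp add: apply_linear_factors_def)
  qed
qed simp

lemma vectors_dependent_if_card_gt: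
  fixes v :: "'i \<Rightarrow> 'a::field^'n"
  assumes "finite I" "CARD('n) < card I"
  shows "\<exists>c. (\<Sum>i\<in>I. c i *s v i) = 0 \<and> (\<exists>i\<in>I. c i \<noteq> 0)"
proof (cases "inj_on v I")
  case False
  then obtain i j where ij: "i \<in> I" "j \<in> I" "i \<noteq> j" "v i = v j"
    unfolding inj_on_def by blast
  define c where "c k = (if k = i then 1 else if k = j then -1 else 0 :: 'a)" for k
  have "c k *s v k = (if k = i then v i else 0) - (if k = j then v j else 0)" for k
    using ij(3,4) by (simp add: c_def vector_smult_lneg)
  then have "(\<Sum>k\<in>I. c k *s v k) = v i - v j"
    using assms(1) ij(1,2) by (simp add: sum_subtractf)
  then have "(\<Sum>k\<in>I. c k *s v k) = 0"
    using ij(4) by simp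
  moreover have "c i \<noteq> 0"
    by (simp add: c_def)
  ultimately show ?thesis
    using ij(1) by blast
next
  case True
  have "vec.dependent (v ` I)"
  proof (rule ccontr)
    assume "vec.independent (v ` I)"
    then have "card (v ` I) = vec.dim (v ` I)"
      by (rule vec.dim_eq_card_independent[symmetric])
    also have "\<dots> \<le> CARD('n)"
      by (rule dim_subset_UNIV_cart_gen)
    finally show False
      using assms(2) True by (simp add: card_image)
  qed
  then obtain T u t0 where T: "finite T" "T \<subseteq> v ` I" "(\<Sum>x\<in>T. u x *s x) = 0" "t0 \<in> T" "u t0 \<noteq> 0"
    unfolding vec.dependent_explicit by blast
  define c where "c i = (if v i \<in> T then u (v i) else 0)" for i
  have "(\<Sum>i\<in>I. c i *s v i) = (\<Sum>x\<in>v ` I. if x \<in> T then u x *s x else 0)"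
    unfolding sum.reindex[OF True] by (rule sum.cong) (simp_all add: c_def)
  also have "\<dots> = (\<Sum>x\<in>T. u x *s x)"
    using T(2) assms(1) by (simp add: sum.inter_restrict[symmetric] Int_absorb1)
  finally have "(\<Sum>i\<in>I. c i *s v i) = 0"
    using T(3) by simp
  moreover obtain i where "i \<in> I" "t0 = v i"
    using T(2,4) by blast
  moreover have "c i \<noteq> 0" if "t0 = v i" for i
    using that T(4,5) by (simp add: c_def)
  ultimately show ?thesis
    by blast
qed

lemma poly_vec_annihilator_exists:
  fixes M :: "'a::field^'n^'n"
  shows "\<exists>p. p \<noteq> 0 \<and> degree p \<le> CARD('n) \<and> poly_vec M p w = 0"
proof -
  obtain c where c: "(\<Sum>i\<le>CARD('n). c i *s (matpow M i *v w)) = 0" "\<exists>i\<le>CARD('n). c i \<noteq> 0"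
    using vectors_dependent_if_card_gt[of "{..CARD('n)}" "\<lambda>i. matpow M i *v w"] by auto
  define p where "p = (\<Sum>i\<le>CARD('n). monom (c i) i)"
  have degree: "degree p \<le> CARD('n)"
    unfolding p_def by (rule degree_sum_le) (auto intro: order.trans[OF degree_monom_le])
  have "p \<noteq> 0"
    using c(2) coeff_sum_monom[of _ "CARD('n)" c] by (auto simp: p_def)
  moreover have "poly_vec M p w = (\<Sum>i\<le>CARD('n). c i *s (matpow M i *v w))"
    unfolding poly_vec_eq_sum[OF degree] by (intro sum.cong) (simp_all add: p_def coeff_sum_monom)
  ultimately show ?thesis
    using degree c(1) by auto
qed

definition cx_vec :: "real^'n \<Rightarrow> complex^'n" where
  "cx_vec v = (\<chi> i. complex_of_real (v $ i))"

lemma cx_vec_eq_0_iff [simp]: "cx_vec v = 0 \<longleftrightarrow> v = 0"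
  by (simp add: vec_eq_iff cx_vec_def)

lemma cx_mat_mult_cx_vec: "cx_mat A *v cx_vec v = cx_vec (A *v v)"
  by (simp add: vec_eq_iff cx_vec_def cx_mat_def matrix_vector_mult_def)

lemma cx_vec_apply_linear_factors:
  "cx_vec (apply_linear_factors A ls v)
    = apply_linear_factors (cx_mat A) (map complex_of_real ls) (cx_vec v)"
proof (induction ls arbitrary: v)
  case (Cons l ls)
  have "cx_vec (A *v v - l *s v) = cx_mat A *v cx_vec v - complex_of_real l *s cx_vec v"
    unfolding cx_mat_mult_cx_vec by (simp add: vec_eq_iff cx_vec_def)
  with Cons.IH show ?case
    by (simp add: apply_linear_factors_def)
qed (simp add: apply_linear_factors_def)

lemma positive_linear_factors_annihilate:
  fixes A :: "real^'n^'n"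
  assumes "\<forall>c. eigenvalue_of A c \<longrightarrow> Im c = 0 \<and> Re c > 0"
  shows "\<exists>ls. (\<forall>l\<in>set ls. l > 0) \<and> length ls \<le> CARD('n) \<and> apply_linear_factors A ls x = 0"
proof -
  obtain p where p: "p \<noteq> 0" "degree p \<le> CARD('n)" "poly_vec (cx_mat A) p (cx_vec x) = 0"
    using poly_vec_annihilator_exists by blast
  obtain ms where ms: "mset ms = proots p"
    using ex_mset by blast
  have "length ms \<le> degree p"
    using size_proots_le[of p] by (simp flip: ms)
  have "(\<Prod>m\<in>#proots p. [:-m, 1:]) = (\<Prod>m\<leftarrow>ms. [:-m, 1:])"
    by (simp flip: ms prod_mset_prod_list)
  then have "p = smult (lead_coeff p) (\<Prod>m\<leftarrow>ms. [:-m, 1:])"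
    using complex_poly_decompose_multiset[of p] by simp
  then have "lead_coeff p *s apply_linear_factors (cx_mat A) ms (cx_vec x) = 0"
    using p(3) by (metis poly_vec_smult poly_vec_prod_linear_factors)
  then have "apply_linear_factors (cx_mat A) ms (cx_vec x) = 0"
    using p(1) by simp
  then have eigen_roots: "apply_linear_factors (cx_mat A) (filter (eigenvalue_of A) ms) (cx_vec x) = 0"
    by (rule apply_linear_factors_filter[rotated]) (auto simp: eigenvalue_of_def)
  define ls where "ls = map Re (filter (eigenvalue_of A) ms)"
  have "map complex_of_real ls = filter (eigenvalue_of A) ms"
    unfolding ls_def map_map by (rule map_idI) (use assms in \<open>auto simp: complex_eq_iff\<close>)
  then have "cx_vec (apply_linear_factors A ls x) = 0"
    using eigen_roots by (simp add: cx_vec_apply_linear_factors)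
  then have "apply_linear_factors A ls x = 0"
    by simp
  moreover have "length ls \<le> CARD('n)"
    using length_filter_le[of "eigenvalue_of A" ms] \<open>length ms \<le> degree p\<close> p(2)
    unfolding ls_def length_map by linarith
  moreover have "\<forall>l\<in>set ls. l > 0"
    using assms by (auto simp: ls_def)
  ultimately show ?thesis
    by blast
qed

lemma fold_shift_diff_output:
  fixes A :: "real^'n^'n"
  shows "fold shift_diff ls (\<lambda>k. C \<bullet> (matpow A k *v x))
    = (\<lambda>k. C \<bullet> (matpow A k *v apply_linear_factors A ls x))"
proof (induction ls arbitrary: x)
  case (Cons l ls)
  have "shift_diff l (\<lambda>k. C \<bullet> (matpow A k *v x)) = (\<lambda>k. C \<bullet> (matpow A k *v (A *v x - l *s x)))"
    by (simp add: fun_eq_iff shift_diff_def matpow_mult_vector_Suc_right matrix_vector_mult_diff_distrib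
        inner_diff_right scalar_mult_eq_scaleR matrix_vector_mult_scaleR del: matpow.simps)
  with Cons.IH show ?case
    by (simp add: apply_linear_factors_def)
qed (simp add: apply_linear_factors_def)

lemma observable_imp_eq_0:
  fixes A :: "real^'n^'n"
  assumes "observable A C" "\<And>k. C \<bullet> (matpow A k *v x) = 0"
  shows "x = 0"
proof -
  let ?S = "{C v* matpow A k | k. k < CARD('n)}"
  have "vec.span ?S = UNIV"
    using assms(1) vec.dim_eq_span[of ?S UNIV]
    by (simp add: observable_def vec_dim_card vec.span_UNIV card_cart_basis)
  then have "x \<in> span ?S"
    by (simp add: span_vec_eq)
  moreover have "orthogonal x y" if "y \<in> ?S" for y
    using that assms(2) by (auto simp: orthogonal_def inner_commute[of x] dot_lmul_matrix)
  ultimately have "orthogonal x x"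
    by (rule orthogonal_to_span)
  then show ?thesis
    by (simp add: orthogonal_def)
qed

theorem corollary1:
  fixes A :: "real^'n^'n" and C :: "real^'n" and t :: "'n \<Rightarrow> nat"
  assumes "observable A C"
    and "\<forall>c. eigenvalue_of A c \<longrightarrow> c \<noteq> 0"
    and "\<forall>c. eigenvalue_of A c \<longrightarrow> Im c = 0 \<and> Re c > 0"
    and "inj t"
  shows "rank (\<chi> i. C v* matpow A (t i)) = CARD('n)"
proof -
  have "x = 0" if "(\<chi> i. C v* matpow A (t i)) *v x = 0" for x
  proof -
    define f where "f k = C \<bullet> (matpow A k *v x)" for k
    have "f (t i) = 0" for i
    proof -
      have "((\<chi> i. C v* matpow A (t i)) *v x) $ i = 0"
        using that by simp
      then have "(C v* matpow A (t i)) \<bullet> x = 0"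
        by (simp add: matrix_vector_mult_def inner_vec_def)
      then show ?thesis
        by (simp add: f_def dot_lmul_matrix)
    qed
    obtain ls where ls: "\<forall>l\<in>set ls. l > 0" "length ls \<le> CARD('n)" "apply_linear_factors A ls x = 0"
      using positive_linear_factors_annihilate[OF assms(3)] by blast
    have "fold shift_diff ls f = (\<lambda>_. 0)"
      using fold_shift_diff_output[of ls C A x] ls(3) by (simp add: f_def[abs_def])
    moreover have "length ls \<le> card (range t)"
      using ls(2) assms(4) by (simp add: card_image)
    ultimately have "f = (\<lambda>_. 0)"
      using recurrence_zero_if_many_zeros[OF ls(1), of f "range t"] \<open>f (t _) = 0\<close> by auto
    then show "x = 0"
      using observable_imp_eq_0[OF assms(1)] by (simp add: f_def fun_eq_iff)
  qed
  then show ?thesis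
    using matrix_nonfull_linear_equations_eq by blast
qed

end
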